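(* Let $D=\mathbb S^{d-1}$ and consider the fully connected network $f^1(x)=W^0Vx$, $f^{\ell+1}(x)=W^\ell m_\ell^{-1/2}\sigma(f^\ell(x))$ for $\ell=1,\dots,L$, with scalar output $f^{L+1}$ (so $m_{L+1}=1$), where $V\in\mathbb R^{m_0\times d}$ satisfies $V^TV=I$, $W^\ell\in\mathbb R^{m_{\ell+1}\times m_\ell}$, the last-layer weights $W^L$ have entries in $\{-1,+1\}$, and only $\theta=W^{L-1}$ is trained. Assume the activation (which may differ from layer to layer) satisfies $|\sigma(x)|\lesssim|x|$ and $|\sigma(x)-\sigma(\bar x)|\lesssim|x-\bar x|$, that $m_L\sim m_{L-1}\sim\dots\sim m_0$, and that the gradient descent iterates (for the loss $\ell(\theta)=\frac12\|f^{L+1}-f\|_{L_2(D)}^2$ with target $f$ and step $\theta^{k+1}=\theta^k-\gamma\nabla_\theta\ell(\theta^k)$) satisfy $\|W^\ell(n)\|m_\ell^{-1/2}\lesssim1$. Then, with $\kappa^n=f^{L+1}_{\theta^n}-f$, $$\|\nabla_\theta\ell(\theta^n)\|\lesssim\|\kappa^n\|_{L_2(D)}.$$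
   Context: $\|\cdot\|$ denotes the spectral norm of a matrix; $W^\ell(n)$ denotes the layer-$\ell$ weights after $n$ gradient descent steps. $a\lesssim b$ (and $\sim$) means inequality up to constants independent of the widths (possibly depending on $L$ and $d$). *)

theory Defs
  imports "HOL-Analysis.Analysis"
begin

text \<open>Matrices of varying size are represented as functions nat => nat => real;
  only the entries with indices inside the stated dimensions are ever used.\<close>

definition vnorm :: "nat \<Rightarrow> (nat \<Rightarrow> real) \<Rightarrow> real" where
  "vnorm n v = sqrt (\<Sum>j<n. (v j)\<^sup>2)"

definition spec_norm :: "nat \<Rightarrow> nat \<Rightarrow> (nat \<Rightarrow> nat \<Rightarrow> real) \<Rightarrow> real" where
  "spec_norm r s A = Sup {vnorm r (\<lambda>i. \<Sum>j<s. A i j * v j) | v. vnorm s v \<le> 1}"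

text \<open>Uniform probability measure on the unit sphere S^(d-1) in R^d
  (push-forward of the uniform measure on the unit ball under radial projection).\<close>
definition sphere_measure :: "(real ^ 'd) measure" where
  "sphere_measure = distr (uniform_measure lborel (ball 0 1)) borel (\<lambda>x. x /\<^sub>R norm x)"

definition L2norm :: "(real ^ 'd \<Rightarrow> real) \<Rightarrow> real" where
  "L2norm g = sqrt (\<integral>x. (g x)\<^sup>2 \<partial>(sphere_measure :: (real ^ 'd) measure))"

text \<open>The fully connected network.  net m \<sigma> W V 0 x = V x (width m 0),
  net ... 1 x = W^0 V x = f^1(x), and
  net ... (l+1) x = W^l m_l^(-1/2) \<sigma>_l(f^l(x)) = f^(l+1)(x) for l \<ge> 1.\<close>
fun net :: "(nat \<Rightarrow> nat) \<Rightarrow> (nat \<Rightarrow> real \<Rightarrow> real) \<Rightarrow> (nat \<Rightarrow> nat \<Rightarrow> nat \<Rightarrow> real)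
    \<Rightarrow> (nat \<Rightarrow> 'd::finite \<Rightarrow> real) \<Rightarrow> nat \<Rightarrow> real ^ 'd \<Rightarrow> nat \<Rightarrow> real" where
  "net m \<sigma> W V 0 x = (\<lambda>i. \<Sum>k\<in>UNIV. V i k * x $ k)"
| "net m \<sigma> W V (Suc 0) x = (\<lambda>i. \<Sum>j<m 0. W 0 i j * net m \<sigma> W V 0 x j)"
| "net m \<sigma> W V (Suc (Suc l)) x =
     (\<lambda>i. \<Sum>j<m (Suc l). W (Suc l) i j * \<sigma> (Suc l) (net m \<sigma> W V (Suc l) x j) / sqrt (real (m (Suc l))))"

definition net_out :: "(nat \<Rightarrow> nat) \<Rightarrow> (nat \<Rightarrow> real \<Rightarrow> real) \<Rightarrow> (nat \<Rightarrow> nat \<Rightarrow> nat \<Rightarrow> real)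
    \<Rightarrow> (nat \<Rightarrow> 'd::finite \<Rightarrow> real) \<Rightarrow> nat \<Rightarrow> (nat \<Rightarrow> nat \<Rightarrow> real) \<Rightarrow> real ^ 'd \<Rightarrow> real" where
  "net_out m \<sigma> W V L \<theta> x = net m \<sigma> (W(L - 1 := \<theta>)) V (Suc L) x 0"

definition loss :: "(nat \<Rightarrow> nat) \<Rightarrow> (nat \<Rightarrow> real \<Rightarrow> real) \<Rightarrow> (nat \<Rightarrow> nat \<Rightarrow> nat \<Rightarrow> real)
    \<Rightarrow> (nat \<Rightarrow> 'd::finite \<Rightarrow> real) \<Rightarrow> nat \<Rightarrow> (real ^ 'd \<Rightarrow> real) \<Rightarrow> (nat \<Rightarrow> nat \<Rightarrow> real) \<Rightarrow> real" where
  "loss m \<sigma> W V L f \<theta> = 1/2 * (L2norm (\<lambda>x. net_out m \<sigma> W V L \<theta> x - f x))\<^sup>2"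

definition is_gradient :: "(nat \<Rightarrow> nat) \<Rightarrow> (nat \<Rightarrow> real \<Rightarrow> real) \<Rightarrow> (nat \<Rightarrow> nat \<Rightarrow> nat \<Rightarrow> real)
    \<Rightarrow> (nat \<Rightarrow> 'd::finite \<Rightarrow> real) \<Rightarrow> nat \<Rightarrow> (real ^ 'd \<Rightarrow> real) \<Rightarrow> (nat \<Rightarrow> nat \<Rightarrow> real)
    \<Rightarrow> (nat \<Rightarrow> nat \<Rightarrow> real) \<Rightarrow> bool" where
  "is_gradient m \<sigma> W V L f \<theta> G \<longleftrightarrow>
     (\<forall>H. ((\<lambda>t. loss m \<sigma> W V L f (\<lambda>i j. \<theta> i j + t * H i j)) has_real_derivative
             (\<Sum>i<m L. \<Sum>j<m (L - 1). G i j * H i j)) (at 0))"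

end

theory Submission
  imports Defs "HOL-Probability.Probability"
begin

(* The trained matrix theta = W^(L-1) acts on the feature vector y(x)
   (Vx if L = 1, else m_(L-1)^(-1/2) sigma(f^(L-1)(x))), which does not depend on theta.  Pushing
   |x| through the layers with the spectral bounds gives |y(x)| <= A |x| with A = (BK)^(L-1) sqrt c.
   As the readout weights are +-1 and sigma_L is K-Lipschitz, replacing theta by theta + t u v^T
   changes the output by at most K |t| |u| |v . y(x)| <= K A |t| on the sphere.  For a unit vector v
   take u = Gv / |Gv|: the derivative of the loss in this direction is <G, u v^T> = |Gv|, whereas
   the derivative of (1/2) ||kappa_t||^2 is at most K A ||kappa|| by Cauchy-Schwarz.  Hence
   |Gv| <= K A ||kappa|| for all unit v, which bounds the spectral norm of G. *)

section \<open>Euclidean and spectral norms of truncated vectors\<close>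

abbreviation mat_vec :: "nat \<Rightarrow> (nat \<Rightarrow> nat \<Rightarrow> real) \<Rightarrow> (nat \<Rightarrow> real) \<Rightarrow> nat \<Rightarrow> real" where
  "mat_vec s A v \<equiv> (\<lambda>i. \<Sum>j<s. A i j * v j)"

lemma vnorm_eq_L2_set: "vnorm n v = L2_set v {..<n}"
  by (simp add: vnorm_def L2_set_def)

lemma vnorm_nonneg [simp]: "0 \<le> vnorm n v"
  by (simp add: vnorm_eq_L2_set)

lemma power2_vnorm: "(vnorm n v)\<^sup>2 = (\<Sum>j<n. (v j)\<^sup>2)"
  by (simp add: vnorm_def sum_nonneg)

lemma vnorm_mult_left: "vnorm n (\<lambda>i. c * v i) = \<bar>c\<bar> * vnorm n v"
  by (simp add: vnorm_def power_mult_distrib real_sqrt_mult flip: sum_distrib_left)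

lemma vnorm_divide: "vnorm n (\<lambda>i. v i / c) = vnorm n v / \<bar>c\<bar>"
  using vnorm_mult_left[where c="inverse c" and n=n and v=v] by (simp add: field_simps abs_inverse)

lemma vnorm_mono: "(\<And>i. i < n \<Longrightarrow> \<bar>v i\<bar> \<le> \<bar>w i\<bar>) \<Longrightarrow> vnorm n v \<le> vnorm n w"
  unfolding vnorm_def by (intro real_sqrt_le_mono sum_mono) (simp add: abs_le_square_iff)

lemma vnorm_eq_0_iff: "vnorm n v = 0 \<longleftrightarrow> (\<forall>i<n. v i = 0)"
  by (auto simp: vnorm_eq_L2_set L2_set_eq_0_iff)

lemma abs_sum_mult_le_vnorm: "\<bar>\<Sum>j<n. a j * b j\<bar> \<le> vnorm n a * vnorm n b"
proof -
  have "\<bar>\<Sum>j<n. a j * b j\<bar> \<le> (\<Sum>j<n. \<bar>a j\<bar> * \<bar>b j\<bar>)"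
    using sum_abs[of "\<lambda>j. a j * b j" "{..<n}"] by (simp add: abs_mult)
  also have "\<dots> \<le> vnorm n a * vnorm n b"
    unfolding vnorm_eq_L2_set by (rule L2_set_mult_ineq)
  finally show ?thesis .
qed

lemma sum_abs_le_sqrt_vnorm: "(\<Sum>j<n. \<bar>a j\<bar>) \<le> sqrt (real n) * vnorm n a"
proof -
  have "(\<Sum>j<n. \<bar>a j\<bar>) \<le> vnorm n (\<lambda>_. 1) * vnorm n (\<lambda>j. \<bar>a j\<bar>)"
    using abs_sum_mult_le_vnorm[where n=n and a="\<lambda>_. 1" and b="\<lambda>j. \<bar>a j\<bar>"] by simp
  then show ?thesis by (simp add: vnorm_def)
qed

lemma vnorm_mat_vec_rank_one:
  "vnorm r (mat_vec s (\<lambda>i j. u i * v j) y) = \<bar>\<Sum>j<s. v j * y j\<bar> * vnorm r u"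
proof -
  have "mat_vec s (\<lambda>i j. u i * v j) y = (\<lambda>i. (\<Sum>j<s. v j * y j) * u i)"
    by (auto simp: sum_distrib_right intro!: sum.cong)
  then show ?thesis by (simp add: vnorm_mult_left)
qed

lemma vnorm_mat_vec_le_frobenius:
  "vnorm r (mat_vec s A v) \<le> sqrt (\<Sum>i<r. (vnorm s (A i))\<^sup>2) * vnorm s v"
proof -
  have "vnorm r (mat_vec s A v) \<le> vnorm r (\<lambda>i. vnorm s v * vnorm s (A i))"
    by (rule vnorm_mono) (simp add: abs_sum_mult_le_vnorm mult.commute)
  also have "\<dots> = vnorm s v * vnorm r (\<lambda>i. vnorm s (A i))"
    by (simp add: vnorm_mult_left)
  also have "vnorm r (\<lambda>i. vnorm s (A i)) = sqrt (\<Sum>i<r. (vnorm s (A i))\<^sup>2)"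
    by (simp only: vnorm_def[of r "\<lambda>i. vnorm s (A i)"])
  finally show ?thesis by (simp add: mult.commute)
qed

lemma bdd_above_spec_norm: "bdd_above {vnorm r (mat_vec s A v) | v. vnorm s v \<le> 1}"
proof (rule bdd_aboveI, safe)
  fix v assume "vnorm s v \<le> 1"
  then show "vnorm r (mat_vec s A v) \<le> sqrt (\<Sum>i<r. (vnorm s (A i))\<^sup>2)"
    using vnorm_mat_vec_le_frobenius[where r=r and s=s and A=A and v=v]
      mult_left_le[where c="vnorm s v" and a="sqrt (\<Sum>i<r. (vnorm s (A i))\<^sup>2)"]
    by (simp add: sum_nonneg)
qed

lemma vnorm_mat_vec_le_spec_norm: "vnorm s v \<le> 1 \<Longrightarrow> vnorm r (mat_vec s A v) \<le> spec_norm r s A"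
  unfolding spec_norm_def by (rule cSup_upper[OF _ bdd_above_spec_norm]) auto

lemma spec_norm_nonneg: "0 \<le> spec_norm r s A"
  using vnorm_mat_vec_le_spec_norm[where v="\<lambda>_. 0" and r=r and s=s and A=A]
  by (simp add: vnorm_def)

lemma spec_norm_le:
  "(\<And>v. vnorm s v \<le> 1 \<Longrightarrow> vnorm r (mat_vec s A v) \<le> b) \<Longrightarrow> spec_norm r s A \<le> b"
  unfolding spec_norm_def
  by (rule cSup_least) (auto intro: exI[of _ "\<lambda>_. 0"] simp: vnorm_def)

lemma vnorm_mat_vec_le: "vnorm r (mat_vec s A v) \<le> spec_norm r s A * vnorm s v"
proof (cases "vnorm s v = 0")
  case True
  then have "mat_vec s A v = (\<lambda>_. 0)"
    by (simp add: vnorm_eq_0_iff)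
  then show ?thesis using True by (simp add: vnorm_def)
next
  case False
  then have pos: "0 < vnorm s v" by (simp add: less_le)
  have "vnorm s (\<lambda>j. v j / vnorm s v) = 1"
    using pos by (simp only: vnorm_divide abs_of_pos) simp
  then have "vnorm r (mat_vec s A (\<lambda>j. v j / vnorm s v)) \<le> spec_norm r s A"
    by (intro vnorm_mat_vec_le_spec_norm) simp
  also have "mat_vec s A (\<lambda>j. v j / vnorm s v) = (\<lambda>i. mat_vec s A v i / vnorm s v)"
    by (simp add: sum_divide_distrib)
  finally have "vnorm r (mat_vec s A v) / vnorm s v \<le> spec_norm r s A"
    using pos by (simp only: vnorm_divide abs_of_pos)
  then show ?thesis by (simp only: pos_divide_le_eq[OF pos])
qed

lemma sum_mult_normalized_rank_one:
  assumes "vnorm r (mat_vec q G v) \<noteq> 0"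
  shows "(\<Sum>i<r. \<Sum>j<q. G i j * (mat_vec q G v i / vnorm r (mat_vec q G v) * v j))
    = vnorm r (mat_vec q G v)"
proof -
  define s where "s = vnorm r (mat_vec q G v)"
  have "(\<Sum>i<r. \<Sum>j<q. G i j * (mat_vec q G v i / s * v j)) = (\<Sum>i<r. (mat_vec q G v i)\<^sup>2) / s"
    by (simp add: sum_divide_distrib sum_distrib_left power2_eq_square mult_ac)
  also have "\<dots> = s"
    using assms by (simp add: s_def flip: power2_vnorm) (simp add: power2_eq_square)
  finally show ?thesis unfolding s_def .
qed

section \<open>Perturbation of a squared \<open>L\<^sub>2\<close> norm\<close>

lemma (in prob_space) integral_abs_le_sqrt_integral_square:
  fixes g :: "'a \<Rightarrow> real"
  assumes "g \<in> borel_measurable M" and "integrable M (\<lambda>x. (g x)\<^sup>2)"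
  shows "(\<integral>x. \<bar>g x\<bar> \<partial>M) \<le> sqrt (\<integral>x. (g x)\<^sup>2 \<partial>M)"
proof -
  have "integrable M g"
    using assms by (rule square_integrable_imp_integrable)
  then have "variance (\<lambda>x. \<bar>g x\<bar>) = (\<integral>x. (g x)\<^sup>2 \<partial>M) - (\<integral>x. \<bar>g x\<bar> \<partial>M)\<^sup>2"
    using assms(2) by (subst variance_eq) auto
  with variance_positive[of "\<lambda>x. \<bar>g x\<bar>"] show ?thesis
    by (intro real_le_rsqrt) (auto intro: integral_nonneg)
qed

lemma abs_deriv_le_of_increment_le:
  fixes \<phi> :: "real \<Rightarrow> real"
  assumes deriv: "(\<phi> has_real_derivative D) (at 0)"
    and incr: "\<And>t. \<bar>\<phi> t - \<phi> 0\<bar> \<le> a * \<bar>t\<bar> + b * t\<^sup>2"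
  shows "\<bar>D\<bar> \<le> a"
proof -
  have lim_quotient: "((\<lambda>t. \<bar>(\<phi> t - \<phi> 0) / t\<bar>) \<longlongrightarrow> \<bar>D\<bar>) (at 0)"
    using deriv unfolding has_field_derivative_iff by (intro tendsto_intros) simp
  have lim_bound: "((\<lambda>t. a + b * \<bar>t\<bar>) \<longlongrightarrow> a) (at (0::real))"
    by (auto intro!: tendsto_eq_intros)
  have "\<forall>\<^sub>F t in at 0. \<bar>(\<phi> t - \<phi> 0) / t\<bar> \<le> a + b * \<bar>t\<bar>"
    unfolding eventually_at_filter
  proof (intro always_eventually allI impI)
    fix t :: real assume "t \<noteq> 0"
    then show "\<bar>(\<phi> t - \<phi> 0) / t\<bar> \<le> a + b * \<bar>t\<bar>"
      using incr[of t] by (simp add: abs_divide divide_le_eq power2_eq_square algebra_simps)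
  qed
  then show ?thesis
    by (intro tendsto_le[OF _ lim_bound lim_quotient]) simp
qed

lemma lipschitz_constant_nonneg:
  fixes g :: "real \<Rightarrow> real"
  assumes "\<And>a b. \<bar>g a - g b\<bar> \<le> K * \<bar>a - b\<bar>"
  shows "0 \<le> K"
  using order_trans[OF abs_ge_zero assms[of 1 0]] by simp

lemma abs_diff_square_le:
  fixes u w :: real
  assumes "\<bar>u - w\<bar> \<le> d"
  shows "\<bar>u\<^sup>2 - w\<^sup>2\<bar> \<le> 2 * d * \<bar>w\<bar> + d\<^sup>2"
proof -
  have "\<bar>u\<^sup>2 - w\<^sup>2\<bar> = \<bar>u - w\<bar> * \<bar>2 * w + (u - w)\<bar>"
    by (simp add: power2_eq_square abs_mult[symmetric] algebra_simps)
  also have "\<dots> \<le> d * (2 * \<bar>w\<bar> + d)"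
    using assms by (intro mult_mono) auto
  finally show ?thesis by (simp add: power2_eq_square algebra_simps)
qed

lemma (in prob_space) abs_deriv_half_integral_square_le:
  fixes F :: "real \<Rightarrow> 'a \<Rightarrow> real"
  assumes meas: "\<And>t. F t \<in> borel_measurable M"
    and sq_int: "\<And>t. integrable M (\<lambda>x. (F t x)\<^sup>2)"
    and lip: "\<And>t. AE x in M. \<bar>F t x - F 0 x\<bar> \<le> c * \<bar>t\<bar>"
    and c: "0 \<le> c"
    and deriv: "((\<lambda>t. 1/2 * (\<integral>x. (F t x)\<^sup>2 \<partial>M)) has_real_derivative D) (at 0)"
  shows "\<bar>D\<bar> \<le> c * sqrt (\<integral>x. (F 0 x)\<^sup>2 \<partial>M)"
proof -
  define E where "E = (\<integral>x. \<bar>F 0 x\<bar> \<partial>M)"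
  have int_F0: "integrable M (F 0)"
    using meas sq_int by (rule square_integrable_imp_integrable)
  have "\<bar>1/2 * (\<integral>x. (F t x)\<^sup>2 \<partial>M) - 1/2 * (\<integral>x. (F 0 x)\<^sup>2 \<partial>M)\<bar>
      \<le> (c * E) * \<bar>t\<bar> + c\<^sup>2 / 2 * t\<^sup>2" for t
  proof -
    have "\<bar>\<integral>x. (F t x)\<^sup>2 - (F 0 x)\<^sup>2 \<partial>M\<bar> \<le> (\<integral>x. \<bar>(F t x)\<^sup>2 - (F 0 x)\<^sup>2\<bar> \<partial>M)"
      using integral_norm_bound[of M "\<lambda>x. (F t x)\<^sup>2 - (F 0 x)\<^sup>2"] by simp
    also have "\<dots> \<le> (\<integral>x. 2 * (c * \<bar>t\<bar>) * \<bar>F 0 x\<bar> + (c * \<bar>t\<bar>)\<^sup>2 \<partial>M)"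
      using lip[of t] sq_int int_F0
      by (intro integral_mono_AE) (auto elim!: AE_mp intro!: abs_diff_square_le)
    also have "\<dots> = 2 * (c * E) * \<bar>t\<bar> + c\<^sup>2 * t\<^sup>2"
      using int_F0 by (simp add: E_def prob_space power_mult_distrib algebra_simps)
    finally show ?thesis
      using sq_int by (simp add: Bochner_Integration.integral_diff flip: right_diff_distrib)
  qed
  then have "\<bar>D\<bar> \<le> c * E"
    by (intro abs_deriv_le_of_increment_le[OF deriv])
  also have "\<dots> \<le> c * sqrt (\<integral>x. (F 0 x)\<^sup>2 \<partial>M)"
    unfolding E_def using meas sq_int c
    by (intro mult_left_mono integral_abs_le_sqrt_integral_square)
  finally show ?thesis .
qed

section \<open>The uniform measure on the sphere\<close>

lemma prob_space_sphere_measure: "prob_space (sphere_measure :: (real ^ 'd::finite) measure)"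
  unfolding sphere_measure_def
proof (rule prob_space.prob_space_distr)
  have "unit_ball_vol (real CARD('d)) \<noteq> 0"
    using unit_ball_vol_pos[of "real CARD('d)"] by linarith
  then show "prob_space (uniform_measure lborel (ball (0::real ^ 'd) 1))"
    by (intro prob_space_uniform_measure) (simp_all add: emeasure_ball)
  show "(\<lambda>x::real ^ 'd. x /\<^sub>R norm x) \<in> uniform_measure lborel (ball 0 1) \<rightarrow>\<^sub>M borel"
    by (simp add: measurable_cong_sets[OF sets_uniform_measure refl])
qed

lemma borel_measurable_sphere_measure:
  "borel_measurable (sphere_measure :: (real ^ 'd::finite) measure) = borel_measurable borel"
  by (rule measurable_cong_sets) (simp_all add: sphere_measure_def)

lemma AE_sphere_measure_norm_le_1: "AE x in (sphere_measure :: (real ^ 'd::finite) measure). norm x \<le> 1"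
  unfolding sphere_measure_def
proof (subst AE_distr_iff)
  show "(\<lambda>x::real ^ 'd. x /\<^sub>R norm x) \<in> uniform_measure lborel (ball 0 1) \<rightarrow>\<^sub>M borel"
    by (simp add: measurable_cong_sets[OF sets_uniform_measure refl])
  show "AE x in uniform_measure lborel (ball 0 1). norm (x /\<^sub>R norm (x::real ^ 'd)) \<le> 1"
  proof (rule AE_I2)
    fix x :: "real ^ 'd"
    show "norm (x /\<^sub>R norm x) \<le> 1" by (cases "x = 0") auto
  qed
qed simp

lemma integrable_sphere_measure_square_diff:
  fixes N f :: "real ^ 'd::finite \<Rightarrow> real"
  assumes N: "continuous_on UNIV N" and f: "f \<in> borel_measurable borel"
    and f_sq: "integrable sphere_measure (\<lambda>x. (f x)\<^sup>2)"
  shows "integrable sphere_measure (\<lambda>x. (N x - f x)\<^sup>2)"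
proof -
  interpret prob_space "sphere_measure :: (real ^ 'd) measure"
    by (rule prob_space_sphere_measure)
  have "compact (N ` cball 0 1)"
    by (rule compact_continuous_image) (use N continuous_on_subset in auto)
  then obtain R where "\<forall>y \<in> N ` cball 0 1. norm y \<le> R"
    using compact_imp_bounded bounded_iff by metis
  then have R: "\<And>x. norm x \<le> 1 \<Longrightarrow> \<bar>N x\<bar> \<le> R"
    by auto
  show ?thesis
  proof (rule Bochner_Integration.integrable_bound)
    show "integrable sphere_measure (\<lambda>x. 2 * R\<^sup>2 + 2 * (f x)\<^sup>2)"
      using f_sq by auto
    show "(\<lambda>x. (N x - f x)\<^sup>2) \<in> borel_measurable sphere_measure"
      using borel_measurable_continuous_onI[OF N] f
      by (simp add: borel_measurable_sphere_measure)
    show "AE x in sphere_measure. norm ((N x - f x)\<^sup>2) \<le> norm (2 * R\<^sup>2 + 2 * (f x)\<^sup>2)"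
      using AE_sphere_measure_norm_le_1
    proof eventually_elim
      fix x :: "real ^ 'd" assume "norm x \<le> 1"
      then have "(N x)\<^sup>2 \<le> R\<^sup>2"
        using power_mono[OF R abs_ge_zero, of x 2] by simp
      moreover have "(N x - f x)\<^sup>2 \<le> 2 * (N x)\<^sup>2 + 2 * (f x)\<^sup>2"
        using zero_le_power2[of "N x + f x"] by (simp add: power2_eq_square algebra_simps)
      ultimately show "norm ((N x - f x)\<^sup>2) \<le> norm (2 * R\<^sup>2 + 2 * (f x)\<^sup>2)"
        by simp
    qed
  qed
qed

lemma L2norm_nonneg: "0 \<le> L2norm g"
  by (simp add: L2norm_def)

lemma power2_L2norm: "(L2norm g)\<^sup>2 = (\<integral>x. (g x)\<^sup>2 \<partial>sphere_measure)"
  by (simp add: L2norm_def)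

section \<open>The network as a function of the trained layer\<close>

definition layer_input :: "(nat \<Rightarrow> nat) \<Rightarrow> (nat \<Rightarrow> real \<Rightarrow> real) \<Rightarrow> (nat \<Rightarrow> nat \<Rightarrow> nat \<Rightarrow> real)
    \<Rightarrow> (nat \<Rightarrow> 'd::finite \<Rightarrow> real) \<Rightarrow> nat \<Rightarrow> real ^ 'd \<Rightarrow> nat \<Rightarrow> real" where
  "layer_input m \<sigma> W V l x =
     (if l = 0 then net m \<sigma> W V 0 x else (\<lambda>j. \<sigma> l (net m \<sigma> W V l x j) / sqrt (real (m l))))"

lemma net_Suc: "net m \<sigma> W V (Suc l) x = mat_vec (m l) (W l) (layer_input m \<sigma> W V l x)"
  by (cases l) (simp_all add: layer_input_def)

lemma net_cong: "(\<And>k. k < l \<Longrightarrow> W k = W' k) \<Longrightarrow> net m \<sigma> W V l x = net m \<sigma> W' V l x"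
  by (induction m \<sigma> W V l x rule: net.induct) auto

lemma layer_input_fun_upd: "layer_input m \<sigma> (W(l := \<theta>)) V l x = layer_input m \<sigma> W V l x"
proof -
  have "net m \<sigma> (W(l := \<theta>)) V l x = net m \<sigma> W V l x"
    by (rule net_cong) simp
  then show ?thesis by (simp add: layer_input_def)
qed

lemma vnorm_layer_input_0:
  fixes V :: "nat \<Rightarrow> 'd::finite \<Rightarrow> real"
  assumes orth: "\<And>k k'. (\<Sum>i<m 0. V i k * V i k') = (if k = k' then 1 else 0)"
  shows "vnorm (m 0) (layer_input m \<sigma> W V 0 x) = norm x"
proof -
  have "(\<Sum>i<m 0. (\<Sum>k\<in>UNIV. V i k * x $ k)\<^sup>2)
      = (\<Sum>k\<in>UNIV. \<Sum>k'\<in>UNIV. x $ k * x $ k' * (\<Sum>i<m 0. V i k * V i k'))"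
    by (simp add: power2_eq_square sum_product sum_distrib_left algebra_simps sum.swap[of _ "{..<m 0}"])
  also have "\<dots> = (\<Sum>k\<in>UNIV. (x $ k)\<^sup>2)"
    by (simp add: orth power2_eq_square if_distrib cong: if_cong)
  finally show ?thesis
    by (simp add: layer_input_def vnorm_def norm_vec_def L2_set_def)
qed

lemma vnorm_layer_input_le_net:
  assumes "l \<noteq> 0" and "0 < m l" and "0 \<le> K" and growth: "\<And>z. \<bar>\<sigma> l z\<bar> \<le> K * \<bar>z\<bar>"
  shows "vnorm (m l) (layer_input m \<sigma> W V l x)
    \<le> K * vnorm (m l) (net m \<sigma> W V l x) / sqrt (real (m l))"
proof -
  have "vnorm (m l) (\<lambda>j. \<sigma> l (net m \<sigma> W V l x j)) \<le> vnorm (m l) (\<lambda>j. K * net m \<sigma> W V l x j)"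
    using growth \<open>0 \<le> K\<close> by (intro vnorm_mono) (simp add: abs_mult)
  then show ?thesis
    using assms by (simp add: layer_input_def vnorm_divide vnorm_mult_left divide_right_mono)
qed

lemma vnorm_layer_input_le:
  fixes V :: "nat \<Rightarrow> 'd::finite \<Rightarrow> real"
  assumes orth: "\<And>k k'. (\<Sum>i<m 0. V i k * V i k') = (if k = k' then 1 else 0)"
    and pos: "\<And>k. k \<le> l \<Longrightarrow> 0 < m k"
    and spec: "\<And>k. k < l \<Longrightarrow> spec_norm (m (Suc k)) (m k) (W k) / sqrt (real (m k)) \<le> B"
    and growth: "\<And>k z. 1 \<le> k \<Longrightarrow> k \<le> l \<Longrightarrow> \<bar>\<sigma> k z\<bar> \<le> K * \<bar>z\<bar>"
    and "0 \<le> K"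
  shows "vnorm (m l) (layer_input m \<sigma> W V l x)
    \<le> (B * K) ^ l * sqrt (real (m 0) / real (m l)) * norm x"
  using pos spec growth
proof (induction l)
  case 0
  then show ?case by (simp add: vnorm_layer_input_0[where m=m and V=V, OF orth])
next
  case (Suc l)
  have m: "0 < m l" "0 < m (Suc l)" using Suc.prems(1) by auto
  have spec_l: "spec_norm (m (Suc l)) (m l) (W l) \<le> B * sqrt (real (m l))"
    using Suc.prems(2)[of l] m by (simp add: pos_divide_le_eq)
  then have "0 \<le> B"
    using order_trans[OF spec_norm_nonneg spec_l] m by (simp add: zero_le_mult_iff)
  have IH: "vnorm (m l) (layer_input m \<sigma> W V l x)
      \<le> (B * K) ^ l * sqrt (real (m 0) / real (m l)) * norm x"
    using Suc.prems by (intro Suc.IH) auto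
  have "vnorm (m (Suc l)) (net m \<sigma> W V (Suc l) x)
      \<le> spec_norm (m (Suc l)) (m l) (W l) * vnorm (m l) (layer_input m \<sigma> W V l x)"
    unfolding net_Suc by (rule vnorm_mat_vec_le)
  also have "\<dots> \<le> B * sqrt (real (m l)) * ((B * K) ^ l * sqrt (real (m 0) / real (m l)) * norm x)"
    using spec_l IH \<open>0 \<le> B\<close> by (intro mult_mono) auto
  also have "\<dots> = B * (B * K) ^ l * sqrt (real (m 0)) * norm x"
    using m by (simp add: real_sqrt_divide)
  finally have net_bound:
    "vnorm (m (Suc l)) (net m \<sigma> W V (Suc l) x) \<le> B * (B * K) ^ l * sqrt (real (m 0)) * norm x" .
  have "vnorm (m (Suc l)) (layer_input m \<sigma> W V (Suc l) x)
      \<le> K * vnorm (m (Suc l)) (net m \<sigma> W V (Suc l) x) / sqrt (real (m (Suc l)))"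
    using m Suc.prems(3) \<open>0 \<le> K\<close> by (intro vnorm_layer_input_le_net) auto
  also have "\<dots> \<le> K * (B * (B * K) ^ l * sqrt (real (m 0)) * norm x) / sqrt (real (m (Suc l)))"
    using net_bound \<open>0 \<le> K\<close> by (intro divide_right_mono mult_left_mono) auto
  also have "\<dots> = (B * K) ^ Suc l * sqrt (real (m 0) / real (m (Suc l))) * norm x"
    by (simp add: real_sqrt_divide)
  finally show ?case .
qed

lemma abs_readout_diff_le:
  assumes "0 < s" and w: "\<And>j. j < s \<Longrightarrow> \<bar>w j\<bar> \<le> 1"
    and lip: "\<And>a b. \<bar>g a - g b\<bar> \<le> K * \<bar>a - b\<bar>"
  shows "\<bar>(\<Sum>j<s. w j * (g (a j) / sqrt (real s))) - (\<Sum>j<s. w j * (g (b j) / sqrt (real s)))\<bar>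
    \<le> K * vnorm s (\<lambda>j. a j - b j)"
proof -
  have "0 \<le> K" using lip by (rule lipschitz_constant_nonneg)
  have "\<bar>(\<Sum>j<s. w j * (g (a j) / sqrt (real s))) - (\<Sum>j<s. w j * (g (b j) / sqrt (real s)))\<bar>
      = \<bar>\<Sum>j<s. w j * (g (a j) - g (b j)) / sqrt (real s)\<bar>"
    by (simp add: diff_divide_distrib right_diff_distrib sum_subtractf)
  also have "\<dots> \<le> (\<Sum>j<s. \<bar>w j * (g (a j) - g (b j)) / sqrt (real s)\<bar>)"
    by (rule sum_abs)
  also have "\<dots> \<le> (\<Sum>j<s. K * \<bar>a j - b j\<bar> / sqrt (real s))"
  proof (rule sum_mono)
    fix j assume "j \<in> {..<s}"
    then have "\<bar>w j\<bar> * \<bar>g (a j) - g (b j)\<bar> \<le> 1 * (K * \<bar>a j - b j\<bar>)"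
      using w lip by (intro mult_mono) auto
    then show "\<bar>w j * (g (a j) - g (b j)) / sqrt (real s)\<bar> \<le> K * \<bar>a j - b j\<bar> / sqrt (real s)"
      by (simp add: abs_mult divide_right_mono)
  qed
  also have "\<dots> = K * (\<Sum>j<s. \<bar>a j - b j\<bar>) / sqrt (real s)"
    by (simp add: sum_distrib_left sum_divide_distrib)
  also have "\<dots> \<le> K * (sqrt (real s) * vnorm s (\<lambda>j. a j - b j)) / sqrt (real s)"
    using \<open>0 \<le> K\<close> by (intro divide_right_mono mult_left_mono sum_abs_le_sqrt_vnorm) auto
  also have "\<dots> = K * vnorm s (\<lambda>j. a j - b j)"
    using \<open>0 < s\<close> by simp
  finally show ?thesis .
qed

lemma net_out_Suc:
  "net_out m \<sigma> W V (Suc p) \<theta> x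
     = (\<Sum>j<m (Suc p). W (Suc p) 0 j * (\<sigma> (Suc p) (mat_vec (m p) \<theta> (layer_input m \<sigma> W V p x) j)
         / sqrt (real (m (Suc p)))))"
  by (simp add: net_out_def net_Suc[of m \<sigma> _ V "Suc p"] net_Suc[of m \<sigma> _ V p]
      layer_input_def[of m \<sigma> _ V "Suc p"] layer_input_fun_upd del: net.simps)

lemma abs_net_out_diff_le:
  assumes "1 \<le> L" and "0 < m L" and readout: "\<And>j. j < m L \<Longrightarrow> \<bar>W L 0 j\<bar> \<le> 1"
    and lip: "\<And>a b. \<bar>\<sigma> L a - \<sigma> L b\<bar> \<le> K * \<bar>a - b\<bar>"
  shows "\<bar>net_out m \<sigma> W V L \<theta>' x - net_out m \<sigma> W V L \<theta> x\<bar>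
    \<le> K * vnorm (m L) (mat_vec (m (L - 1)) (\<lambda>i j. \<theta>' i j - \<theta> i j) (layer_input m \<sigma> W V (L - 1) x))"
proof -
  define y where "y = layer_input m \<sigma> W V (L - 1) x"
  have out: "net_out m \<sigma> W V L A x
      = (\<Sum>j<m L. W L 0 j * (\<sigma> L (mat_vec (m (L - 1)) A y j) / sqrt (real (m L))))" for A
    using \<open>1 \<le> L\<close> net_out_Suc[of m \<sigma> W V "L - 1" A x] by (simp add: y_def)
  have "\<bar>net_out m \<sigma> W V L \<theta>' x - net_out m \<sigma> W V L \<theta> x\<bar>
      \<le> K * vnorm (m L) (\<lambda>i. mat_vec (m (L - 1)) \<theta>' y i - mat_vec (m (L - 1)) \<theta> y i)"
    unfolding out using \<open>0 < m L\<close> readout lip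
    by (rule abs_readout_diff_le[where g="\<sigma> L"
          and a="mat_vec (m (L - 1)) \<theta>' y" and b="mat_vec (m (L - 1)) \<theta> y"])
  also have "(\<lambda>i. mat_vec (m (L - 1)) \<theta>' y i - mat_vec (m (L - 1)) \<theta> y i)
      = mat_vec (m (L - 1)) (\<lambda>i j. \<theta>' i j - \<theta> i j) y"
    by (simp add: left_diff_distrib sum_subtractf)
  finally show ?thesis unfolding y_def .
qed

lemma continuous_on_net:
  assumes "\<And>k. 1 \<le> k \<Longrightarrow> k < l \<Longrightarrow> continuous_on UNIV (\<sigma> k)"
  shows "continuous_on UNIV (\<lambda>x. net m \<sigma> W V l x i)"
  using assms
proof (induction l arbitrary: i)
  case 0
  then show ?case by (auto intro!: continuous_intros)
next
  case (Suc l)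
  have net_l: "continuous_on UNIV (\<lambda>x. net m \<sigma> W V l x j)" for j
    using Suc by auto
  have "continuous_on UNIV (\<lambda>x. layer_input m \<sigma> W V l x j)" for j
  proof (cases "l = 0")
    case False
    then have "continuous_on UNIV (\<sigma> l)" using Suc.prems by auto
    then have "continuous_on UNIV (\<lambda>x. \<sigma> l (net m \<sigma> W V l x j))"
      by (rule continuous_on_compose2[OF _ net_l]) auto
    then show ?thesis
      using False by (simp add: layer_input_def divide_inverse continuous_on_mult_right)
  qed (use net_l in \<open>simp add: layer_input_def\<close>)
  then show ?case
    unfolding net_Suc by (auto intro!: continuous_intros)
qed

lemma abs_net_out_rank_one_step_le:
  assumes "1 \<le> L" and "0 < m L" and readout: "\<And>j. j < m L \<Longrightarrow> \<bar>W L 0 j\<bar> \<le> 1"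
    and lip: "\<And>a b. \<bar>\<sigma> L a - \<sigma> L b\<bar> \<le> K * \<bar>a - b\<bar>"
    and features: "vnorm (m (L - 1)) (layer_input m \<sigma> W V (L - 1) x) \<le> A * norm x"
  shows "\<bar>net_out m \<sigma> W V L (\<lambda>i j. \<theta> i j + t * (u i * v j)) x - net_out m \<sigma> W V L \<theta> x\<bar>
    \<le> K * A * norm x * \<bar>t\<bar> * vnorm (m L) u * vnorm (m (L - 1)) v"
proof -
  define y where "y = layer_input m \<sigma> W V (L - 1) x"
  have "0 \<le> K" using lip by (rule lipschitz_constant_nonneg)
  have "\<bar>\<Sum>j<m (L - 1). v j * y j\<bar> \<le> vnorm (m (L - 1)) v * vnorm (m (L - 1)) y"
    by (rule abs_sum_mult_le_vnorm)
  also have "\<dots> \<le> vnorm (m (L - 1)) v * (A * norm x)"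
    using features by (simp add: y_def mult_left_mono)
  finally have inner: "\<bar>\<Sum>j<m (L - 1). v j * y j\<bar> \<le> vnorm (m (L - 1)) v * (A * norm x)" .
  have "\<bar>net_out m \<sigma> W V L (\<lambda>i j. \<theta> i j + t * (u i * v j)) x - net_out m \<sigma> W V L \<theta> x\<bar>
      \<le> K * vnorm (m L) (mat_vec (m (L - 1)) (\<lambda>i j. \<theta> i j + t * (u i * v j) - \<theta> i j) y)"
    unfolding y_def using assms(1-4) by (rule abs_net_out_diff_le)
  also have "(\<lambda>i j. \<theta> i j + t * (u i * v j) - \<theta> i j) = (\<lambda>i j. (t * u i) * v j)"
    by (simp add: fun_eq_iff)
  also have "vnorm (m L) (mat_vec (m (L - 1)) (\<lambda>i j. (t * u i) * v j) y)
      = \<bar>\<Sum>j<m (L - 1). v j * y j\<bar> * (\<bar>t\<bar> * vnorm (m L) u)"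
    by (simp only: vnorm_mat_vec_rank_one vnorm_mult_left)
  also have "K * (\<bar>\<Sum>j<m (L - 1). v j * y j\<bar> * (\<bar>t\<bar> * vnorm (m L) u))
      \<le> K * ((vnorm (m (L - 1)) v * (A * norm x)) * (\<bar>t\<bar> * vnorm (m L) u))"
    using inner \<open>0 \<le> K\<close> by (intro mult_left_mono mult_right_mono) auto
  finally show ?thesis by (simp add: mult_ac)
qed

section \<open>The gradient bound\<close>

lemma is_gradientD:
  "is_gradient m \<sigma> W V L f \<theta> G \<Longrightarrow>
    ((\<lambda>t. loss m \<sigma> W V L f (\<lambda>i j. \<theta> i j + t * H i j)) has_real_derivative
      (\<Sum>i<m L. \<Sum>j<m (L - 1). G i j * H i j)) (at 0)"
  by (simp add: is_gradient_def)

lemma continuous_on_net_out: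
  assumes lip: "\<And>k a b. 1 \<le> k \<Longrightarrow> k \<le> L \<Longrightarrow> \<bar>\<sigma> k a - \<sigma> k b\<bar> \<le> K * \<bar>a - b\<bar>"
  shows "continuous_on UNIV (\<lambda>x. net_out m \<sigma> W V L \<theta> x)"
  unfolding net_out_def
proof (rule continuous_on_net)
  fix k assume "1 \<le> k" "k < Suc L"
  then have lip_k: "\<And>a b. \<bar>\<sigma> k a - \<sigma> k b\<bar> \<le> K * \<bar>a - b\<bar>"
    using lip by simp
  then have "K-lipschitz_on UNIV (\<sigma> k)"
    using lipschitz_constant_nonneg[OF lip_k] by (intro lipschitz_onI) (auto simp: dist_real_def)
  then show "continuous_on UNIV (\<sigma> k)"
    by (rule lipschitz_on_continuous_on)
qed

lemma abs_deriv_loss_rank_one_le: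
  fixes V :: "nat \<Rightarrow> 'd::finite \<Rightarrow> real" and f :: "real ^ 'd \<Rightarrow> real"
  assumes L: "1 \<le> L" and pos: "0 < m L"
    and readout: "\<And>j. j < m L \<Longrightarrow> \<bar>W L 0 j\<bar> \<le> 1"
    and lip: "\<And>k a b. 1 \<le> k \<Longrightarrow> k \<le> L \<Longrightarrow> \<bar>\<sigma> k a - \<sigma> k b\<bar> \<le> K * \<bar>a - b\<bar>"
    and f_meas: "f \<in> borel_measurable borel" and f_sq: "integrable sphere_measure (\<lambda>x. (f x)\<^sup>2)"
    and features: "\<And>x. vnorm (m (L - 1)) (layer_input m \<sigma> W V (L - 1) x) \<le> A * norm x"
    and "0 \<le> A" and u: "vnorm (m L) u \<le> 1" and v: "vnorm (m (L - 1)) v \<le> 1"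
    and deriv: "((\<lambda>t. loss m \<sigma> W V L f (\<lambda>i j. \<theta> i j + t * (u i * v j))) has_real_derivative D) (at 0)"
  shows "\<bar>D\<bar> \<le> K * A * L2norm (\<lambda>x. net_out m \<sigma> W V L \<theta> x - f x)"
proof -
  define F where "F = (\<lambda>t x. net_out m \<sigma> W V L (\<lambda>i j. \<theta> i j + t * (u i * v j)) x - f x)"
  have "0 \<le> K"
    using lip[OF L order_refl] by (rule lipschitz_constant_nonneg)
  have cont: "continuous_on UNIV (\<lambda>x. net_out m \<sigma> W V L \<theta>' x)" for \<theta>'
    using lip by (rule continuous_on_net_out)
  have "((\<lambda>t. 1/2 * (\<integral>x. (F t x)\<^sup>2 \<partial>sphere_measure)) has_real_derivative D) (at 0)"
    using deriv by (simp add: F_def loss_def power2_L2norm)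
  moreover have "F t \<in> borel_measurable sphere_measure" for t
    unfolding F_def borel_measurable_sphere_measure
    by (intro borel_measurable_diff borel_measurable_continuous_onI cont f_meas)
  moreover have "integrable sphere_measure (\<lambda>x. (F t x)\<^sup>2)" for t
    unfolding F_def using cont f_meas f_sq by (rule integrable_sphere_measure_square_diff)
  moreover have "AE x in sphere_measure. \<bar>F t x - F 0 x\<bar> \<le> (K * A) * \<bar>t\<bar>" for t
    using AE_sphere_measure_norm_le_1
  proof eventually_elim
    fix x :: "real ^ 'd" assume "norm x \<le> 1"
    have "\<bar>F t x - F 0 x\<bar>
        = \<bar>net_out m \<sigma> W V L (\<lambda>i j. \<theta> i j + t * (u i * v j)) x - net_out m \<sigma> W V L \<theta> x\<bar>"
      by (simp add: F_def)
    also have "\<dots> \<le> K * A * norm x * \<bar>t\<bar> * vnorm (m L) u * vnorm (m (L - 1)) v"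
      by (rule abs_net_out_rank_one_step_le[OF L pos readout lip[OF L order_refl] features])
    also have "\<dots> \<le> K * A * 1 * \<bar>t\<bar> * 1 * 1"
      using \<open>norm x \<le> 1\<close> u v \<open>0 \<le> K\<close> \<open>0 \<le> A\<close>
      by (intro mult_mono) (auto intro: mult_nonneg_nonneg)
    finally show "\<bar>F t x - F 0 x\<bar> \<le> (K * A) * \<bar>t\<bar>" by simp
  qed
  ultimately have "\<bar>D\<bar> \<le> (K * A) * sqrt (\<integral>x. (F 0 x)\<^sup>2 \<partial>sphere_measure)"
    using \<open>0 \<le> K\<close> \<open>0 \<le> A\<close>
    by (intro prob_space.abs_deriv_half_integral_square_le[OF prob_space_sphere_measure]) auto
  then show ?thesis
    by (simp add: F_def L2norm_def)
qed

lemma spec_norm_gradient_le: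
  fixes V :: "nat \<Rightarrow> 'd::finite \<Rightarrow> real" and f :: "real ^ 'd \<Rightarrow> real"
  assumes L: "1 \<le> L" and pos: "0 < m L"
    and readout: "\<And>j. j < m L \<Longrightarrow> \<bar>W L 0 j\<bar> \<le> 1"
    and lip: "\<And>k a b. 1 \<le> k \<Longrightarrow> k \<le> L \<Longrightarrow> \<bar>\<sigma> k a - \<sigma> k b\<bar> \<le> K * \<bar>a - b\<bar>"
    and f_meas: "f \<in> borel_measurable borel" and f_sq: "integrable sphere_measure (\<lambda>x. (f x)\<^sup>2)"
    and grad: "is_gradient m \<sigma> W V L f \<theta> G"
    and features: "\<And>x. vnorm (m (L - 1)) (layer_input m \<sigma> W V (L - 1) x) \<le> A * norm x"
    and "0 \<le> A"
  shows "spec_norm (m L) (m (L - 1)) G \<le> K * A * L2norm (\<lambda>x. net_out m \<sigma> W V L \<theta> x - f x)"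
proof (rule spec_norm_le)
  fix v assume v: "vnorm (m (L - 1)) v \<le> 1"
  define s where "s = vnorm (m L) (mat_vec (m (L - 1)) G v)"
  show "s \<le> K * A * L2norm (\<lambda>x. net_out m \<sigma> W V L \<theta> x - f x)"
  proof (cases "s = 0")
    case True
    have "0 \<le> K"
      using lip[OF L order_refl] by (rule lipschitz_constant_nonneg)
    with True show ?thesis
      using \<open>0 \<le> A\<close> by (simp add: L2norm_nonneg)
  next
    case False
    define u where "u = (\<lambda>i. mat_vec (m (L - 1)) G v i / s)"
    have "0 < s"
      using False unfolding s_def by (simp add: less_le)
    then have "vnorm (m L) u = 1"
      unfolding u_def vnorm_divide s_def[symmetric] by simp
    have "(\<Sum>i<m L. \<Sum>j<m (L - 1). G i j * (u i * v j)) = s"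
      unfolding u_def s_def by (rule sum_mult_normalized_rank_one[OF False[unfolded s_def]])
    then have "((\<lambda>t. loss m \<sigma> W V L f (\<lambda>i j. \<theta> i j + t * (u i * v j))) has_real_derivative s) (at 0)"
      using is_gradientD[OF grad, of "\<lambda>i j. u i * v j"] by (simp only:)
    then have "\<bar>s\<bar> \<le> K * A * L2norm (\<lambda>x. net_out m \<sigma> W V L \<theta> x - f x)"
      using \<open>vnorm (m L) u = 1\<close>
      by (intro abs_deriv_loss_rank_one_le[OF L pos readout lip f_meas f_sq features \<open>0 \<le> A\<close> _ v])
        simp_all
    then show ?thesis
      by simp
  qed
qed

lemma spec_norm_gradient_le_residual:
  fixes V :: "nat \<Rightarrow> 'd::finite \<Rightarrow> real" and f :: "real ^ 'd \<Rightarrow> real"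
  assumes L: "1 \<le> L"
    and pos: "\<And>l. l \<le> L \<Longrightarrow> 0 < m l"
    and widths: "\<And>l. l \<le> L \<Longrightarrow> real (m 0) \<le> c * real (m l)"
    and orth: "\<And>k k'. (\<Sum>i<m 0. V i k * V i k') = (if k = k' then 1 else 0)"
    and readout: "\<And>j. j < m L \<Longrightarrow> \<bar>W L 0 j\<bar> \<le> 1"
    and growth: "\<And>l z. 1 \<le> l \<Longrightarrow> l \<le> L \<Longrightarrow> \<bar>\<sigma> l z\<bar> \<le> K * \<bar>z\<bar>"
    and lip: "\<And>l a b. 1 \<le> l \<Longrightarrow> l \<le> L \<Longrightarrow> \<bar>\<sigma> l a - \<sigma> l b\<bar> \<le> K * \<bar>a - b\<bar>"
    and f_meas: "f \<in> borel_measurable borel" and f_sq: "integrable sphere_measure (\<lambda>x. (f x)\<^sup>2)"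
    and grad: "is_gradient m \<sigma> W V L f \<theta> G"
    and spec: "\<And>l. l \<le> L \<Longrightarrow> spec_norm (m (Suc l)) (m l) ((W(L - 1 := \<theta>)) l) / sqrt (real (m l)) \<le> B"
  shows "spec_norm (m L) (m (L - 1)) G
    \<le> K * ((B * K) ^ (L - 1) * sqrt c) * L2norm (\<lambda>x. net_out m \<sigma> W V L \<theta> x - f x)"
proof (rule spec_norm_gradient_le[OF L pos[OF order_refl] readout lip f_meas f_sq grad])
  have "0 \<le> K"
    using lip[OF L order_refl] by (rule lipschitz_constant_nonneg)
  have "0 \<le> spec_norm (m (Suc 0)) (m 0) ((W(L - 1 := \<theta>)) 0) / sqrt (real (m 0))"
    by (simp add: spec_norm_nonneg)
  then have "0 \<le> B"
    using spec[of 0] by linarith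
  have ratio: "real (m 0) / real (m (L - 1)) \<le> c"
    using widths[of "L - 1"] pos[of "L - 1"] by (simp add: pos_divide_le_eq)
  have "0 \<le> c"
    using order_trans[OF divide_nonneg_nonneg[OF of_nat_0_le_iff of_nat_0_le_iff] ratio] .
  then show "0 \<le> (B * K) ^ (L - 1) * sqrt c"
    using \<open>0 \<le> B\<close> \<open>0 \<le> K\<close> by simp
  fix x
  have "vnorm (m (L - 1)) (layer_input m \<sigma> W V (L - 1) x)
      = vnorm (m (L - 1)) (layer_input m \<sigma> (W(L - 1 := \<theta>)) V (L - 1) x)"
    by (simp only: layer_input_fun_upd)
  also have "\<dots> \<le> (B * K) ^ (L - 1) * sqrt (real (m 0) / real (m (L - 1))) * norm x"
  proof (rule vnorm_layer_input_le[where m=m and V=V, OF orth])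
    fix k assume "k < L - 1"
    then show "spec_norm (m (Suc k)) (m k) ((W(L - 1 := \<theta>)) k) / sqrt (real (m k)) \<le> B"
      by (intro spec) simp
  qed (use \<open>0 \<le> K\<close> in \<open>auto intro: pos growth\<close>)
  also have "\<dots> \<le> (B * K) ^ (L - 1) * sqrt c * norm x"
    using ratio \<open>0 \<le> B\<close> \<open>0 \<le> K\<close> by (intro mult_right_mono mult_left_mono) auto
  finally show "vnorm (m (L - 1)) (layer_input m \<sigma> W V (L - 1) x)
      \<le> (B * K) ^ (L - 1) * sqrt c * norm x" .
qed

theorem lemma5p3:
  fixes L :: nat and K c B :: real
  assumes "L \<ge> 1"
  shows "\<exists>C. \<forall>(m :: nat \<Rightarrow> nat) (\<sigma> :: nat \<Rightarrow> real \<Rightarrow> real) (W :: nat \<Rightarrow> nat \<Rightarrow> nat \<Rightarrow> real)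
            (V :: nat \<Rightarrow> 'd::finite \<Rightarrow> real) (f :: real ^ 'd \<Rightarrow> real) (\<gamma> :: real)
            (\<theta> :: nat \<Rightarrow> nat \<Rightarrow> nat \<Rightarrow> real) (G :: nat \<Rightarrow> nat \<Rightarrow> nat \<Rightarrow> real).
     (\<forall>l\<le>Suc L. m l > 0) \<and> m (Suc L) = 1 \<and>
     (\<forall>l\<le>L. real (m l) \<le> c * real (m 0) \<and> real (m 0) \<le> c * real (m l)) \<and>
     (\<forall>k k'. (\<Sum>i<m 0. V i k * V i k') = (if k = k' then 1 else 0)) \<and>
     (\<forall>j<m L. W L 0 j \<in> {-1, 1}) \<and>
     (\<forall>l x. 1 \<le> l \<and> l \<le> L \<longrightarrow> \<bar>\<sigma> l x\<bar> \<le> K * \<bar>x\<bar>) \<and>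
     (\<forall>l x y. 1 \<le> l \<and> l \<le> L \<longrightarrow> \<bar>\<sigma> l x - \<sigma> l y\<bar> \<le> K * \<bar>x - y\<bar>) \<and>
     f \<in> borel_measurable borel \<and> integrable sphere_measure (\<lambda>x. (f x)\<^sup>2) \<and>
     (\<forall>n. is_gradient m \<sigma> W V L f (\<theta> n) (G n)) \<and>
     (\<forall>n i j. \<theta> (Suc n) i j = \<theta> n i j - \<gamma> * G n i j) \<and>
     (\<forall>n. \<forall>l\<le>L. spec_norm (m (Suc l)) (m l) ((W(L - 1 := \<theta> n)) l) / sqrt (real (m l)) \<le> B)
     \<longrightarrow> (\<forall>n. spec_norm (m L) (m (L - 1)) (G n)
              \<le> C * L2norm (\<lambda>x. net_out m \<sigma> W V L (\<theta> n) x - f x))"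
  by (intro exI[of _ "K * ((B * K) ^ (L - 1) * sqrt c)"] allI impI, elim conjE)
    (rule spec_norm_gradient_le_residual[OF assms]; auto)

end
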